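(* Assume the hypotheses: $U_e=U_f=U\ge0$, $\beta<-2$, $\kappa_g\ge16$, $\alpha\le2\min\{\beta,-3\}-1$, deterministic source $g$, and a realization of the static velocity with $|V_k|,|W_k|\le\Xi$. Let $\varpi$ be as defined below and suppose $\varepsilon:=4U\Xi\varpi<1$. Then the iterates $\theta^{(0)}=-\Delta^{-1}g$, $\theta^{(n+1)}=\Delta^{-1}(u\cdot\nabla\theta^{(n)}-g)$ converge mode-wise to a limit $\theta^{(\infty)}$, and there is a constant $c_1$ depending only on $(\gamma_k)$, $c_g$, $\kappa_g$, $\alpha$, $\beta$ (times $U\Xi$) such that for all $k\neq0$ $$|\theta^{(1)}_k-\theta^{(\infty)}_k|\le c_1\,\varepsilon\,|k|^{-2}K_\beta(|k|).$$
   Context: Setting: $D=[0,2\pi]^3$ periodic; mean-zero functions $f=\sum_{k\in\mathbb Z^3\setminus\{0\}}f_ke^{ik\cdot x}$; $(\Delta^{-1}f)_k=-|k|^{-2}f_k$. Craya–Herring basis: for $k=(k_x,k_y,k_z)$ with $|k_h|:=\sqrt{k_x^2+k_y^2}>0$, $e_k=(k_y,-k_x,0)/|k_h|$, $f_k=(k_xk_z,k_yk_z,-|k_h|^2)/(|k||k_h|)$; for $k\ne0$ on the $z$-axis, a fixed orthonormal pair orthogonal to $k$. Source: $\Delta^{-1}g=\sum_{k\ne0}\gamma_ke^{ik\cdot x}$ with $\gamma_{-k}=\overline{\gamma_k}$, constants $c_g\ge0$, $\kappa_g>1$, $\alpha<0$, $|\gamma_k|\le c_g|k|^\alpha$ for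 $|k|\ge\kappa_g$. Velocity: $u(x)=\sum_{k\ne0}|k|^\beta U[e_kV_k+f_kW_k]e^{ik\cdot x}$ with complex $V_k,W_k$, $V_{-k}=\overline{V_k}$, $W_{-k}=\overline{W_k}$, $|V_k|,|W_k|\le\Xi$. $K_\beta(s):=\min\{1,(s/(2\kappa_g))^\beta\}$; $\varpi:=\sup_{k\neq0}K_\beta(|k|)^{-1}\sum_{j\notin\{0,k\}}|k-j|^\beta|j|^{-1}K_\beta(|j|)$ (finite since $\beta<-2$). *)

theory Defs
  imports "HOL-Analysis.Analysis"
begin

type_synonym wv = "int \<times> int \<times> int"

definition kvec :: "wv \<Rightarrow> real^3" where
  "kvec k = (case k of (a, b, c) \<Rightarrow> vector [of_int a, of_int b, of_int c])"

definition knorm :: "wv \<Rightarrow> real" where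
  "knorm k = norm (kvec k)"

definition khnorm :: "wv \<Rightarrow> real" where
  "khnorm k = (case k of (a, b, c) \<Rightarrow> sqrt (of_int a ^ 2 + of_int b ^ 2))"

definition ksub :: "wv \<Rightarrow> wv \<Rightarrow> wv" where
  "ksub k j = (case k of (a, b, c) \<Rightarrow> case j of (a', b', c') \<Rightarrow> (a - a', b - b', c - c'))"

definition kneg :: "wv \<Rightarrow> wv" where
  "kneg k = (case k of (a, b, c) \<Rightarrow> (- a, - b, - c))"

text \<open>Craya--Herring basis. For k on the z-axis (horizontal part zero) the pair
  (Ez k, Fz k) is the fixed orthonormal pair orthogonal to k (a parameter).\<close>

definition CH_e :: "(wv \<Rightarrow> real^3) \<Rightarrow> wv \<Rightarrow> real^3" where
  "CH_e Ez k = (if khnorm k > 0 then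
     (case k of (a, b, c) \<Rightarrow> vector [of_int b / khnorm k, - of_int a / khnorm k, 0])
   else Ez k)"

definition CH_f :: "(wv \<Rightarrow> real^3) \<Rightarrow> wv \<Rightarrow> real^3" where
  "CH_f Fz k = (if khnorm k > 0 then
     (case k of (a, b, c) \<Rightarrow>
        vector [of_int a * of_int c / (knorm k * khnorm k),
                of_int b * of_int c / (knorm k * khnorm k),
                - (khnorm k ^ 2) / (knorm k * khnorm k)])
   else Fz k)"

text \<open>Fourier coefficient of the velocity at mode m, dotted with the (real) vector j:
  u_m . j = |m|^beta U (V_m (e_m . j) + W_m (f_m . j)).\<close>

definition udot :: "real \<Rightarrow> real \<Rightarrow> (wv \<Rightarrow> complex) \<Rightarrow> (wv \<Rightarrow> complex)
   \<Rightarrow> (wv \<Rightarrow> real^3) \<Rightarrow> (wv \<Rightarrow> real^3) \<Rightarrow> wv \<Rightarrow> wv \<Rightarrow> complex" where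
  "udot U \<beta> V W Ez Fz m j =
     of_real (knorm m powr \<beta> * U) *
       (V m * of_real (CH_e Ez m \<bullet> kvec j) + W m * of_real (CH_f Fz m \<bullet> kvec j))"

text \<open>The summand of the k-th Fourier coefficient of u . grad theta:
  (u_{k-j} . (i j)) theta_j.\<close>

definition adv_term :: "real \<Rightarrow> real \<Rightarrow> (wv \<Rightarrow> complex) \<Rightarrow> (wv \<Rightarrow> complex)
   \<Rightarrow> (wv \<Rightarrow> real^3) \<Rightarrow> (wv \<Rightarrow> real^3) \<Rightarrow> (wv \<Rightarrow> complex) \<Rightarrow> wv \<Rightarrow> wv \<Rightarrow> complex" where
  "adv_term U \<beta> V W Ez Fz \<theta> k j = \<i> * udot U \<beta> V W Ez Fz (ksub k j) j * \<theta> j"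

text \<open>Iterates: theta0 = - Delta^{-1} g, theta(n+1) = Delta^{-1}(u . grad theta(n) - g),
  in Fourier coefficients, with (Delta^{-1} g)_k = gamma_k and (Delta^{-1} f)_k = -|k|^{-2} f_k.
  The zero mode is set to 0 (mean-zero functions).\<close>

fun theta_iter :: "(wv \<Rightarrow> complex) \<Rightarrow> real \<Rightarrow> real \<Rightarrow> (wv \<Rightarrow> complex) \<Rightarrow> (wv \<Rightarrow> complex)
   \<Rightarrow> (wv \<Rightarrow> real^3) \<Rightarrow> (wv \<Rightarrow> real^3) \<Rightarrow> nat \<Rightarrow> wv \<Rightarrow> complex" where
  "theta_iter \<gamma> U \<beta> V W Ez Fz 0 = (\<lambda>k. if k = (0,0,0) then 0 else - \<gamma> k)"
| "theta_iter \<gamma> U \<beta> V W Ez Fz (Suc n) = (\<lambda>k. if k = (0,0,0) then 0 else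
     - of_real (knorm k powr (-2)) *
         infsum (adv_term U \<beta> V W Ez Fz (theta_iter \<gamma> U \<beta> V W Ez Fz n) k) (UNIV - {(0,0,0), k})
     - \<gamma> k)"

definition Kb :: "real \<Rightarrow> real \<Rightarrow> real \<Rightarrow> real" where
  "Kb \<kappa> \<beta> s = min 1 ((s / (2 * \<kappa>)) powr \<beta>)"

definition varpi :: "real \<Rightarrow> real \<Rightarrow> real" where
  "varpi \<kappa> \<beta> = (SUP k \<in> UNIV - {(0,0,0)}.
      inverse (Kb \<kappa> \<beta> (knorm k)) *
      infsum (\<lambda>j. knorm (ksub k j) powr \<beta> * inverse (knorm j) * Kb \<kappa> \<beta> (knorm j))
             (UNIV - {(0,0,0), k}))"

end

theory Submission
  imports Defs
begin

text \<open>The map \<open>\<theta> \<mapsto> \<Delta>\<^sup>-\<^sup>1(u\<cdot>\<nabla>\<theta> - g)\<close> is a contraction for the weighted sup-norm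
  \<open>sup\<^sub>k |\<theta>\<^sub>k| / (|k|\<^sup>-\<^sup>2 K\<^sub>\<beta>(|k|))\<close>: if \<open>|\<theta>\<^sub>j| \<le> A |j|\<^sup>-\<^sup>2 K\<^sub>\<beta>(|j|)\<close>, the \<open>j\<close>-th term of the
  convolution defining \<open>(u\<cdot>\<nabla>\<theta>)\<^sub>k\<close> is at most \<open>2U\<Xi>A |k-j|\<^sup>\<beta> |j|\<^sup>-\<^sup>1 K\<^sub>\<beta>(|j|)\<close>, and by the very
  definition of \<open>\<varpi>\<close> these sum to at most \<open>2U\<Xi>A \<varpi> K\<^sub>\<beta>(|k|)\<close>. So the contraction factor is
  \<open>2U\<Xi>\<varpi> = \<epsilon>/2\<close>. The constant \<open>\<varpi>\<close> is finite: according to whether \<open>|j| < |k|/2\<close>, the summand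
  is bounded by \<open>K\<^sub>\<beta>(|k|)\<close> times \<open>|j|\<^sup>\<beta>\<^sup>-\<^sup>1\<close> or \<open>|k-j|\<^sup>\<beta>\<^sup>-\<^sup>1\<close>, both summable over \<open>\<int>\<^sup>3\<close> as
  \<open>\<beta> - 1 < -3\<close>. Since \<open>\<alpha> \<le> \<beta> - 2\<close>, the source lies in the weighted space, and the distance
  from the first iterate to the limit is bounded by the geometric tail \<open>\<Sum>\<^sub>n\<^sub>\<ge>\<^sub>2 (\<epsilon>/2)\<^sup>n\<close> of the
  increments.\<close>

lemma knorm_eq: "knorm (a,b,c) = sqrt (of_int a ^ 2 + of_int b ^ 2 + of_int c ^ 2)"
  by (simp add: knorm_def kvec_def norm_eq_sqrt_inner inner_vec_def sum_3 power2_eq_square)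

lemma knorm_nonneg: "0 \<le> knorm k"
  by (simp add: knorm_def)

lemma knorm_ge_one:
  assumes "k \<noteq> (0,0,0)"
  shows "1 \<le> knorm k"
proof -
  obtain a b c where k: "k = (a,b,c)" by (cases k) auto
  have "a \<noteq> 0 \<or> b \<noteq> 0 \<or> c \<noteq> 0" using assms k by auto
  hence "1 \<le> a\<^sup>2 + b\<^sup>2 + c\<^sup>2"
    by (smt (verit) power2_less_eq_zero_iff zero_le_power2 int_one_le_iff_zero_less)
  hence "(1::real) \<le> of_int (a\<^sup>2 + b\<^sup>2 + c\<^sup>2)" by (metis of_int_1 of_int_le_iff)
  thus ?thesis by (simp add: k knorm_eq)
qed

lemma abs_component_le_knorm:
  "\<bar>real_of_int a\<bar> \<le> knorm (a,b,c)" "\<bar>real_of_int b\<bar> \<le> knorm (a,b,c)"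
  "\<bar>real_of_int c\<bar> \<le> knorm (a,b,c)"
  unfolding knorm_eq by (auto intro!: real_le_rsqrt)

lemma kvec_ksub: "kvec (ksub k j) = kvec k - kvec j"
  by (cases k; cases j) (simp add: ksub_def kvec_def vec_eq_iff forall_3)

lemma ksub_eq_zero_iff: "ksub k j = (0,0,0) \<longleftrightarrow> j = k"
  by (cases k; cases j) (auto simp: ksub_def)

lemma inj_ksub: "inj (ksub k)"
  by (rule injI, cases k) (auto simp: ksub_def split: prod.splits)

lemma knorm_le_knorm_ksub_add: "knorm k \<le> knorm (ksub k j) + knorm j"
  unfolding knorm_def kvec_ksub using norm_triangle_ineq[of "kvec k - kvec j" "kvec j"] by simp

lemma knorm_ksub_le: "knorm (ksub k j) \<le> knorm k + knorm j"
  unfolding knorm_def kvec_ksub by (rule norm_triangle_ineq4)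

section \<open>The profile \<open>K\<^sub>\<beta>\<close>\<close>

lemma Kb_pos: "0 < s \<Longrightarrow> 0 < \<kappa> \<Longrightarrow> 0 < Kb \<kappa> \<beta> s"
  by (simp add: Kb_def)

lemma Kb_le_powr: "Kb \<kappa> \<beta> s \<le> (s / (2 * \<kappa>)) powr \<beta>"
  by (simp add: Kb_def)

lemma Kb_antimono:
  assumes "0 < s" "s \<le> t" "0 < \<kappa>" "\<beta> \<le> 0"
  shows "Kb \<kappa> \<beta> t \<le> Kb \<kappa> \<beta> s"
proof -
  have "(t / (2 * \<kappa>)) powr \<beta> \<le> (s / (2 * \<kappa>)) powr \<beta>"
    using assms by (intro powr_mono2') (auto simp: divide_right_mono)
  thus ?thesis by (auto simp: Kb_def)
qed

lemma half_powr_eq: "(1/2 :: real) powr \<beta> = 2 powr (-\<beta>)"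
  by (simp add: powr_divide powr_minus divide_simps)

lemma Kb_half_le:
  assumes "0 < s" "0 < \<kappa>" "\<beta> \<le> 0"
  shows "Kb \<kappa> \<beta> (s / 2) \<le> 2 powr (-\<beta>) * Kb \<kappa> \<beta> s"
proof -
  have "s / 2 / (2 * \<kappa>) = (1/2) * (s / (2 * \<kappa>))" by simp
  hence e: "(s / 2 / (2 * \<kappa>)) powr \<beta> = 2 powr (-\<beta>) * (s / (2 * \<kappa>)) powr \<beta>"
    by (simp only: half_powr_eq[symmetric] powr_mult)
  have "1 \<le> 2 powr (-\<beta>)" using assms by (intro ge_one_powr_ge_zero) auto
  thus ?thesis unfolding Kb_def e
    by (smt (verit, best) mult_le_cancel_right1 powr_ge_zero min_def)
qed

lemma half_powr_le_Kb:
  assumes "1 \<le> s" "1 \<le> \<kappa>" "\<beta> \<le> 0"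
  shows "(s / 2) powr \<beta> \<le> 2 powr (-\<beta>) * Kb \<kappa> \<beta> s"
proof -
  have "(s / 2) powr \<beta> \<le> (1/2) powr \<beta>" using assms by (intro powr_mono2') auto
  moreover have "(s / 2) powr \<beta> \<le> (s / (2 * \<kappa>)) powr \<beta>"
    using assms by (intro powr_mono2') (auto simp: divide_simps)
  moreover have "1 \<le> 2 powr (-\<beta>)" using assms by (intro ge_one_powr_ge_zero) auto
  hence "(s / (2 * \<kappa>)) powr \<beta> \<le> 2 powr (-\<beta>) * (s / (2 * \<kappa>)) powr \<beta>"
    by (simp add: mult_le_cancel_right1)
  ultimately show ?thesis unfolding Kb_def half_powr_eq by (auto simp: min_def)
qed

lemma powr_le_Kb:
  assumes "1 \<le> s" "1 \<le> \<kappa>" "\<beta> \<le> 0"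
  shows "s powr \<beta> \<le> Kb \<kappa> \<beta> s"
proof -
  have "s powr \<beta> \<le> 1" using assms powr_mono2'[of \<beta> 1 s] by simp
  moreover have "s powr \<beta> \<le> (s / (2 * \<kappa>)) powr \<beta>"
    using assms by (intro powr_mono2') (auto simp: divide_simps)
  ultimately show ?thesis unfolding Kb_def by simp
qed

lemma inverse_mult_powr:
  fixes s :: real
  assumes "0 < s"
  shows "inverse s * s powr \<beta> = s powr (\<beta> - 1)"
proof -
  have "s powr \<beta> = s powr (\<beta> - 1) * s" using powr_add[of s "\<beta> - 1" 1] assms by simp
  thus ?thesis using assms by simp
qed

lemma inverse_mult_Kb_le:
  fixes s :: real
  assumes "0 < s" "0 < \<kappa>"
  shows "inverse s * Kb \<kappa> \<beta> s \<le> (2 * \<kappa>) powr (-\<beta>) * s powr (\<beta> - 1)"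
proof -
  have "inverse s * Kb \<kappa> \<beta> s \<le> inverse s * (s / (2 * \<kappa>)) powr \<beta>"
    using assms by (intro mult_left_mono Kb_le_powr) auto
  also have "(s / (2 * \<kappa>)) powr \<beta> = s powr \<beta> / (2 * \<kappa>) powr \<beta>"
    using assms by (simp add: powr_divide)
  also have "\<dots> = s powr \<beta> * (2 * \<kappa>) powr (-\<beta>)"
    by (simp only: powr_minus divide_inverse)
  also have "inverse s * (s powr \<beta> * (2 * \<kappa>) powr (-\<beta>))
      = (2 * \<kappa>) powr (-\<beta>) * (inverse s * s powr \<beta>)"
    by (simp only: mult.commute mult.left_commute)
  finally show ?thesis using inverse_mult_powr[OF assms(1)] by simp
qed

section \<open>Lattice sums\<close>

lemma summable_on_int_powr:
  assumes "q < -1"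
  shows "(\<lambda>a::int. (1 + \<bar>real_of_int a\<bar>) powr q) summable_on UNIV"
proof -
  let ?f = "\<lambda>a::int. (1 + \<bar>real_of_int a\<bar>) powr q"
  have "summable (\<lambda>n. real n powr q)" using assms summable_real_powr_iff by blast
  hence "summable (\<lambda>n. real (Suc n) powr q)"
    using summable_Suc_iff[of "\<lambda>n. real n powr q"] by simp
  hence nat: "(\<lambda>n. real (Suc n) powr q) summable_on UNIV"
    by (rule summable_nonneg_imp_summable_on) simp
  have "?f \<circ> int = (\<lambda>n. real (Suc n) powr q)" "?f \<circ> (\<lambda>n. - int n) = (\<lambda>n. real (Suc n) powr q)"
    by (auto simp: add.commute)
  hence "?f summable_on range int" "?f summable_on range (\<lambda>n. - int n)"
    using nat summable_on_reindex[of int UNIV ?f] summable_on_reindex[of "\<lambda>n. - int n" UNIV ?f]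
    by (simp_all add: inj_on_def)
  moreover have "range int \<union> range (\<lambda>n. - int n) = UNIV"
  proof -
    have "x \<in> range int \<union> range (\<lambda>n. - int n)" for x :: int
    proof (cases "0 \<le> x")
      case True
      then have "x = int (nat x)" by simp
      thus ?thesis by blast
    next
      case False
      then have "x = - int (nat (-x))" by simp
      thus ?thesis by blast
    qed
    thus ?thesis by blast
  qed
  ultimately show ?thesis using summable_on_union by metis
qed

lemma summable_on_mult_product:
  fixes f :: "'a \<Rightarrow> real" and g :: "'b \<Rightarrow> real"
  assumes "f summable_on UNIV" "g summable_on UNIV" "\<And>x. 0 \<le> f x" "\<And>y. 0 \<le> g y"
  shows "(\<lambda>(x, y). f x * g y) summable_on UNIV"
proof -
  have "(\<lambda>(x, y). f x * g y) summable_on Sigma UNIV (\<lambda>_. UNIV)"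
  proof (rule summable_on_SigmaI[where g = "\<lambda>x. f x * infsum g UNIV"])
    show "((\<lambda>y. case (x, y) of (x, y) \<Rightarrow> f x * g y) has_sum f x * infsum g UNIV) UNIV" for x
      using has_sum_cmult_right[OF has_sum_infsum[OF assms(2)], of "f x"] by simp
    show "(\<lambda>x. f x * infsum g UNIV) summable_on UNIV"
      by (rule summable_on_cmult_left[OF assms(1)])
  qed (use assms in auto)
  thus ?thesis by simp
qed

lemma infsum_diff:
  fixes f g :: "'a \<Rightarrow> 'b::{topological_ab_group_add, t2_space}"
  assumes "f summable_on A" "g summable_on A"
  shows "infsum f A - infsum g A = infsum (\<lambda>x. f x - g x) A"
  using infsum_add[OF assms(1) summable_on_uminus[THEN iffD2, OF assms(2)]]
  by (simp add: infsum_uminus)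

text \<open>Bounding \<open>|m|\<close> below by \<open>max\<^sub>i |m\<^sub>i| \<ge> \<Prod>\<^sub>i ((1 + |m\<^sub>i|)/2)\<^sup>1\<^sup>/\<^sup>3\<close> reduces lattice sums
  over \<open>\<int>\<^sup>3\<close> to products of one-dimensional sums.\<close>

lemma knorm_powr_le_product:
  assumes p: "p \<le> 0" and m: "(a, b, c) \<noteq> (0,0,0)"
  shows "knorm (a, b, c) powr p \<le> 8 powr (-p/3) *
    ((1 + \<bar>of_int a\<bar>) powr (p/3) * ((1 + \<bar>of_int b\<bar>) powr (p/3) * (1 + \<bar>of_int c\<bar>) powr (p/3)))"
proof -
  define x y z where "x = \<bar>real_of_int a\<bar>" "y = \<bar>real_of_int b\<bar>" "z = \<bar>real_of_int c\<bar>"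
  define M where "M = max x (max y z)"
  have M1: "1 \<le> M"
  proof -
    have "a \<noteq> 0 \<or> b \<noteq> 0 \<or> c \<noteq> 0" using m by auto
    hence "1 \<le> x \<or> 1 \<le> y \<or> 1 \<le> z" unfolding x_y_z_def by linarith
    thus ?thesis unfolding M_def by linarith
  qed
  have "x \<le> knorm (a, b, c)" "y \<le> knorm (a, b, c)" "z \<le> knorm (a, b, c)"
    unfolding x_y_z_def by (rule abs_component_le_knorm)+
  hence kn: "M \<le> knorm (a, b, c)" unfolding M_def by simp
  have X: "(1 + x) * ((1 + y) * (1 + z)) \<le> 8 * M ^ 3"
  proof -
    have "0 \<le> x" "0 \<le> y" "0 \<le> z" unfolding x_y_z_def by auto
    moreover have "1 + x \<le> 2 * M" "1 + y \<le> 2 * M" "1 + z \<le> 2 * M" using M1 unfolding M_def by auto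
    ultimately have "(1 + x) * ((1 + y) * (1 + z)) \<le> (2 * M) * ((2 * M) * (2 * M))"
      by (intro mult_mono) auto
    thus ?thesis by (simp add: power3_eq_cube)
  qed
  have Xpos: "0 < (1 + x) * ((1 + y) * (1 + z))" unfolding x_y_z_def by (simp add: add_pos_nonneg)
  have "knorm (a, b, c) powr p \<le> M powr p" using p M1 kn by (intro powr_mono2') auto
  also have "M powr p = (M ^ 3) powr (p/3)"
  proof -
    have "M ^ 3 = M powr 3" using M1 powr_realpow[of M 3] by simp
    thus ?thesis by (simp add: powr_powr)
  qed
  also have "\<dots> \<le> ((1 + x) * ((1 + y) * (1 + z)) / 8) powr (p/3)"
    using p X Xpos by (intro powr_mono2') auto
  also have "\<dots> = ((1 + x) * ((1 + y) * (1 + z))) powr (p/3) / 8 powr (p/3)"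
    using Xpos by (simp add: powr_divide)
  also have "\<dots> = 8 powr (-p/3) * ((1 + x) powr (p/3) * ((1 + y) powr (p/3) * (1 + z) powr (p/3)))"
  proof -
    have "8 powr (-p/3) = 1 / 8 powr (p/3)" using powr_minus_divide[of 8 "p/3"] by simp
    thus ?thesis unfolding powr_mult by simp
  qed
  finally show ?thesis unfolding x_y_z_def .
qed

lemma summable_on_knorm_powr:
  assumes p: "p < -3"
  shows "(\<lambda>m. knorm m powr p) summable_on (UNIV - {(0,0,0)})"
proof -
  let ?h = "\<lambda>a::int. (1 + \<bar>real_of_int a\<bar>) powr (p/3)"
  have h: "?h summable_on UNIV" using p by (intro summable_on_int_powr) simp
  have hh: "(\<lambda>(b, c). ?h b * ?h c) summable_on UNIV"
    by (rule summable_on_mult_product[OF h h]) auto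
  have "(\<lambda>(a, bc). ?h a * (case bc of (b, c) \<Rightarrow> ?h b * ?h c)) summable_on UNIV"
    by (rule summable_on_mult_product[OF h hh]) (auto split: prod.splits)
  hence "(\<lambda>(a, b, c). 8 powr (-p/3) * (?h a * (?h b * ?h c))) summable_on (UNIV :: wv set)"
    by (simp add: case_prod_unfold summable_on_cmult_right)
  hence maj: "(\<lambda>(a, b, c). 8 powr (-p/3) * (?h a * (?h b * ?h c))) summable_on (UNIV - {(0,0,0)})"
    by (rule summable_on_subset) simp
  show ?thesis
  proof (rule summable_on_comparison_test[OF maj])
    fix m :: wv assume "m \<in> UNIV - {(0,0,0)}"
    then obtain a b c where "m = (a, b, c)" "(a, b, c) \<noteq> (0,0,0)" by (cases m) auto
    thus "knorm m powr p \<le> (case m of (a, b, c) \<Rightarrow> 8 powr (-p/3) * (?h a * (?h b * ?h c)))"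
      using knorm_powr_le_product[of p a b c] p by simp
  qed simp
qed

definition lattice_zeta :: "real \<Rightarrow> real" where
  "lattice_zeta p = infsum (\<lambda>m. knorm m powr p) (UNIV - {(0,0,0)})"

lemma knorm_powr_punctured:
  assumes "p < -3"
  shows "(\<lambda>j. knorm j powr p) summable_on (UNIV - {(0,0,0), k})"
    and "infsum (\<lambda>j. knorm j powr p) (UNIV - {(0,0,0), k}) \<le> lattice_zeta p"
proof -
  note S = summable_on_knorm_powr[OF assms]
  show S': "(\<lambda>j. knorm j powr p) summable_on (UNIV - {(0,0,0), k})"
    by (rule summable_on_subset[OF S]) auto
  show "infsum (\<lambda>j. knorm j powr p) (UNIV - {(0,0,0), k}) \<le> lattice_zeta p"
    unfolding lattice_zeta_def by (rule infsum_mono2[OF S' S]) auto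
qed

lemma knorm_ksub_powr_punctured:
  assumes "p < -3"
  shows "(\<lambda>j. knorm (ksub k j) powr p) summable_on (UNIV - {(0,0,0), k})"
    and "infsum (\<lambda>j. knorm (ksub k j) powr p) (UNIV - {(0,0,0), k}) \<le> lattice_zeta p"
proof -
  let ?h = "\<lambda>m. knorm m powr p" and ?A = "UNIV - {(0,0,0), k}"
  note S = summable_on_knorm_powr[OF assms]
  have im: "ksub k ` ?A \<subseteq> UNIV - {(0,0,0)}"
  proof (rule image_subsetI)
    fix j assume "j \<in> ?A"
    thus "ksub k j \<in> UNIV - {(0,0,0)}" using ksub_eq_zero_iff[of k j] by blast
  qed
  have inj: "inj_on (ksub k) ?A" using inj_ksub by (rule inj_on_subset) simp
  have S': "?h summable_on ksub k ` ?A" by (rule summable_on_subset[OF S im])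
  hence "(?h \<circ> ksub k) summable_on ?A" using summable_on_reindex[OF inj] by blast
  thus "(\<lambda>j. knorm (ksub k j) powr p) summable_on ?A" by (simp add: o_def)
  have "infsum (\<lambda>j. knorm (ksub k j) powr p) ?A = infsum ?h (ksub k ` ?A)"
    using infsum_reindex[OF inj, of ?h] by (simp add: o_def)
  also have "\<dots> \<le> lattice_zeta p"
    unfolding lattice_zeta_def by (rule infsum_mono2[OF S' S im]) auto
  finally show "infsum (\<lambda>j. knorm (ksub k j) powr p) ?A \<le> lattice_zeta p" .
qed

section \<open>Finiteness of \<open>\<varpi>\<close>\<close>

definition varpi_summand :: "real \<Rightarrow> real \<Rightarrow> wv \<Rightarrow> wv \<Rightarrow> real" where
  "varpi_summand \<kappa> \<beta> k j = knorm (ksub k j) powr \<beta> * inverse (knorm j) * Kb \<kappa> \<beta> (knorm j)"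

lemma varpi_eq_SUP:
  "varpi \<kappa> \<beta> = (SUP k \<in> UNIV - {(0,0,0)}.
      inverse (Kb \<kappa> \<beta> (knorm k)) * infsum (varpi_summand \<kappa> \<beta> k) (UNIV - {(0,0,0), k}))"
  by (simp add: varpi_def varpi_summand_def[abs_def])

lemma varpi_summand_nonneg: "0 < \<kappa> \<Longrightarrow> 0 \<le> varpi_summand \<kappa> \<beta> k j"
  unfolding varpi_summand_def Kb_def by (auto simp: knorm_nonneg)

lemma varpi_summand_le:
  assumes \<kappa>: "1 \<le> \<kappa>" and \<beta>: "\<beta> \<le> 0" and k: "k \<noteq> (0,0,0)" and j: "j \<noteq> (0,0,0)" "j \<noteq> k"
  shows "varpi_summand \<kappa> \<beta> k j \<le> 2 powr (-\<beta>) * Kb \<kappa> \<beta> (knorm k) *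
           ((2 * \<kappa>) powr (-\<beta>) * knorm j powr (\<beta> - 1) + 3 * knorm (ksub k j) powr (\<beta> - 1))"
proof -
  define n s r where "n = knorm k" "s = knorm j" "r = knorm (ksub k j)"
  have n1: "1 \<le> n" "1 \<le> s" "1 \<le> r"
    using knorm_ge_one k j ksub_eq_zero_iff[of k j] unfolding n_s_r_def by auto
  have c: "0 \<le> 2 powr (-\<beta>) * Kb \<kappa> \<beta> n" using Kb_pos[of n \<kappa> \<beta>] n1 \<kappa> by simp
  have "r powr \<beta> * inverse s * Kb \<kappa> \<beta> s \<le> 2 powr (-\<beta>) * Kb \<kappa> \<beta> n *
          ((2 * \<kappa>) powr (-\<beta>) * s powr (\<beta> - 1) + 3 * r powr (\<beta> - 1))"
  proof (cases "s < n / 2")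
    case True
    have "n / 2 \<le> r" using True knorm_le_knorm_ksub_add[of k j] unfolding n_s_r_def by simp
    hence "r powr \<beta> \<le> (n / 2) powr \<beta>" using n1 \<beta> by (intro powr_mono2') auto
    also have "\<dots> \<le> 2 powr (-\<beta>) * Kb \<kappa> \<beta> n" by (rule half_powr_le_Kb[OF n1(1) \<kappa> \<beta>])
    finally have A: "r powr \<beta> \<le> 2 powr (-\<beta>) * Kb \<kappa> \<beta> n" .
    have B: "inverse s * Kb \<kappa> \<beta> s \<le> (2 * \<kappa>) powr (-\<beta>) * s powr (\<beta> - 1)"
      using n1 \<kappa> by (intro inverse_mult_Kb_le) auto
    have "r powr \<beta> * inverse s * Kb \<kappa> \<beta> s = r powr \<beta> * (inverse s * Kb \<kappa> \<beta> s)" by simp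
    also have "\<dots> \<le> (2 powr (-\<beta>) * Kb \<kappa> \<beta> n) * ((2 * \<kappa>) powr (-\<beta>) * s powr (\<beta> - 1))"
      using c n1 \<kappa> Kb_pos[of s \<kappa> \<beta>] by (intro mult_mono[OF A B]) auto
    also have "\<dots> \<le> 2 powr (-\<beta>) * Kb \<kappa> \<beta> n *
        ((2 * \<kappa>) powr (-\<beta>) * s powr (\<beta> - 1) + 3 * r powr (\<beta> - 1))"
      using c by (intro mult_left_mono) auto
    finally show ?thesis .
  next
    case False
    have "Kb \<kappa> \<beta> s \<le> Kb \<kappa> \<beta> (n / 2)" using False n1 \<kappa> \<beta> by (intro Kb_antimono) auto
    also have "\<dots> \<le> 2 powr (-\<beta>) * Kb \<kappa> \<beta> n" using n1 \<kappa> \<beta> by (intro Kb_half_le) auto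
    finally have A: "Kb \<kappa> \<beta> s \<le> 2 powr (-\<beta>) * Kb \<kappa> \<beta> n" .
    have "r \<le> 3 * s" using False knorm_ksub_le[of k j] unfolding n_s_r_def by simp
    hence "inverse s \<le> 3 * inverse r" using n1 le_imp_inverse_le[of r "3 * s"] by simp
    hence "r powr \<beta> * inverse s \<le> 3 * (inverse r * r powr \<beta>)"
      using mult_left_mono[of "inverse s" "3 * inverse r" "r powr \<beta>"] by (simp add: mult_ac)
    hence B: "r powr \<beta> * inverse s \<le> 3 * r powr (\<beta> - 1)"
      using inverse_mult_powr[of r \<beta>] n1 by simp
    have "r powr \<beta> * inverse s * Kb \<kappa> \<beta> s \<le> (3 * r powr (\<beta> - 1)) * (2 powr (-\<beta>) * Kb \<kappa> \<beta> n)"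
      using n1 \<kappa> Kb_pos[of s \<kappa> \<beta>] by (intro mult_mono[OF B A]) auto
    also have "\<dots> \<le> 2 powr (-\<beta>) * Kb \<kappa> \<beta> n *
        ((2 * \<kappa>) powr (-\<beta>) * s powr (\<beta> - 1) + 3 * r powr (\<beta> - 1))"
      using c by (subst mult.commute, intro mult_left_mono) auto
    finally show ?thesis .
  qed
  thus ?thesis unfolding varpi_summand_def n_s_r_def .
qed

lemma varpi_summand_summable:
  assumes \<kappa>: "1 \<le> \<kappa>" and \<beta>: "\<beta> < -2" and k: "k \<noteq> (0,0,0)"
  shows "varpi_summand \<kappa> \<beta> k summable_on (UNIV - {(0,0,0), k})"
    and "infsum (varpi_summand \<kappa> \<beta> k) (UNIV - {(0,0,0), k})
           \<le> 2 powr (-\<beta>) * ((2 * \<kappa>) powr (-\<beta>) + 3) * lattice_zeta (\<beta> - 1) * Kb \<kappa> \<beta> (knorm k)"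
proof -
  let ?A = "UNIV - {(0,0,0), k}"
  let ?c = "2 powr (-\<beta>) * Kb \<kappa> \<beta> (knorm k)"
  let ?f = "\<lambda>j. (2 * \<kappa>) powr (-\<beta>) * knorm j powr (\<beta> - 1) + 3 * knorm (ksub k j) powr (\<beta> - 1)"
  have p: "\<beta> - 1 < -3" using \<beta> by simp
  note Z1 = knorm_powr_punctured[OF p, of k] and Z2 = knorm_ksub_powr_punctured[OF p, of k]
  have Sf: "?f summable_on ?A" by (intro summable_on_add summable_on_cmult_right Z1(1) Z2(1))
  have Sc: "(\<lambda>j. ?c * ?f j) summable_on ?A" by (rule summable_on_cmult_right[OF Sf])
  have le: "varpi_summand \<kappa> \<beta> k j \<le> ?c * ?f j" if "j \<in> ?A" for j
    using varpi_summand_le[OF \<kappa> _ k] \<beta> that by auto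
  show S: "varpi_summand \<kappa> \<beta> k summable_on ?A"
    by (rule summable_on_comparison_test[OF Sc le]) (use varpi_summand_nonneg \<kappa> in auto)
  have c: "0 \<le> ?c" using Kb_pos[of "knorm k" \<kappa> \<beta>] knorm_ge_one[OF k] \<kappa> by simp
  have "infsum (varpi_summand \<kappa> \<beta> k) ?A \<le> infsum (\<lambda>j. ?c * ?f j) ?A"
    by (rule infsum_mono[OF S Sc le])
  also have "\<dots> = ?c * ((2 * \<kappa>) powr (-\<beta>) * infsum (\<lambda>j. knorm j powr (\<beta> - 1)) ?A
                + 3 * infsum (\<lambda>j. knorm (ksub k j) powr (\<beta> - 1)) ?A)"
    by (simp add: infsum_cmult_right infsum_add Z1(1) Z2(1) summable_on_cmult_right Sf)
  also have "\<dots> \<le> ?c * ((2 * \<kappa>) powr (-\<beta>) * lattice_zeta (\<beta> - 1) + 3 * lattice_zeta (\<beta> - 1))"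
    using c Z1(2) Z2(2) by (intro mult_left_mono add_mono) auto
  finally show "infsum (varpi_summand \<kappa> \<beta> k) ?A
      \<le> 2 powr (-\<beta>) * ((2 * \<kappa>) powr (-\<beta>) + 3) * lattice_zeta (\<beta> - 1) * Kb \<kappa> \<beta> (knorm k)"
    by (simp add: algebra_simps)
qed

lemma infsum_varpi_summand_le_varpi:
  assumes \<kappa>: "1 \<le> \<kappa>" and \<beta>: "\<beta> < -2" and k: "k \<noteq> (0,0,0)"
  shows "infsum (varpi_summand \<kappa> \<beta> k) (UNIV - {(0,0,0), k}) \<le> varpi \<kappa> \<beta> * Kb \<kappa> \<beta> (knorm k)"
proof -
  define f where "f k = inverse (Kb \<kappa> \<beta> (knorm k)) * infsum (varpi_summand \<kappa> \<beta> k) (UNIV - {(0,0,0), k})"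
    for k
  have Kb_pos': "0 < Kb \<kappa> \<beta> (knorm k)" if "k \<noteq> (0,0,0)" for k
    using Kb_pos knorm_ge_one[OF that] \<kappa> by simp
  have "f k \<le> 2 powr (-\<beta>) * ((2 * \<kappa>) powr (-\<beta>) + 3) * lattice_zeta (\<beta> - 1)"
    if "k \<noteq> (0,0,0)" for k
    using varpi_summand_summable(2)[OF \<kappa> \<beta> that] Kb_pos'[OF that]
    unfolding f_def by (simp add: field_simps)
  hence "bdd_above (f ` (UNIV - {(0,0,0)}))" by (intro bdd_aboveI2) auto
  hence "f k \<le> varpi \<kappa> \<beta>"
    unfolding varpi_eq_SUP f_def[symmetric] by (rule cSUP_upper[rotated]) (use k in simp)
  thus ?thesis using Kb_pos'[OF k] unfolding f_def by (simp add: field_simps)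
qed

lemma varpi_nonneg:
  assumes "1 \<le> \<kappa>" "\<beta> < -2"
  shows "0 \<le> varpi \<kappa> \<beta>"
proof -
  let ?k = "(1, 0, 0) :: wv"
  have "0 \<le> infsum (varpi_summand \<kappa> \<beta> ?k) (UNIV - {(0,0,0), ?k})"
    using assms by (intro infsum_nonneg varpi_summand_nonneg) auto
  also have "\<dots> \<le> varpi \<kappa> \<beta> * Kb \<kappa> \<beta> (knorm ?k)"
    using assms by (intro infsum_varpi_summand_le_varpi) auto
  finally show ?thesis
    using Kb_pos[of "knorm ?k" \<kappa> \<beta>] knorm_ge_one[of ?k] assms by (simp add: zero_le_mult_iff)
qed

section \<open>Iterating a contraction in a weighted sup-norm\<close>

definition weighted_bounded :: "'a set \<Rightarrow> ('a \<Rightarrow> real) \<Rightarrow> real \<Rightarrow> ('a \<Rightarrow> 'b::real_normed_vector) \<Rightarrow> bool"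
  where "weighted_bounded I w A \<phi> \<longleftrightarrow> 0 \<le> A \<and> (\<forall>j\<in>I. norm (\<phi> j) \<le> A * w j)"

locale weighted_contraction_iteration =
  fixes I :: "'a set" and w :: "'a \<Rightarrow> real" and q G :: real
    and T :: "('a \<Rightarrow> 'b::banach) \<Rightarrow> 'a \<Rightarrow> 'b" and g :: "'a \<Rightarrow> 'b" and \<theta> :: "nat \<Rightarrow> 'a \<Rightarrow> 'b"
  assumes q_nonneg: "0 \<le> q" and q_less_one: "q < 1"
    and T_bounded: "\<And>\<phi> A k. weighted_bounded I w A \<phi> \<Longrightarrow> k \<in> I \<Longrightarrow> norm (T \<phi> k) \<le> q * A * w k"
    and T_diff: "\<And>\<phi> \<psi> A B k. weighted_bounded I w A \<phi> \<Longrightarrow> weighted_bounded I w B \<psi> \<Longrightarrow> k \<in> I \<Longrightarrow>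
      T \<phi> k - T \<psi> k = T (\<lambda>j. \<phi> j - \<psi> j) k"
    and g_bounded: "weighted_bounded I w G g"
    and iterate_0: "\<And>k. k \<in> I \<Longrightarrow> \<theta> 0 k = g k"
    and iterate_Suc: "\<And>n k. k \<in> I \<Longrightarrow> \<theta> (Suc n) k = T (\<theta> n) k + g k"
begin

lemma iterate_0_bounded: "weighted_bounded I w G (\<theta> 0)"
  using g_bounded iterate_0 by (simp add: weighted_bounded_def)

lemma iterate_bounded: "\<exists>A. weighted_bounded I w A (\<theta> n)"
proof (induction n)
  case 0
  show ?case using iterate_0_bounded ..
next
  case (Suc n)
  then obtain A where A: "weighted_bounded I w A (\<theta> n)" ..
  have "norm (\<theta> (Suc n) k) \<le> (q * A + G) * w k" if k: "k \<in> I" for k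
  proof -
    have "norm (\<theta> (Suc n) k) \<le> norm (T (\<theta> n) k) + norm (g k)"
      using iterate_Suc[OF k] norm_triangle_ineq by simp
    also have "\<dots> \<le> q * A * w k + G * w k"
      using T_bounded[OF A k] g_bounded k unfolding weighted_bounded_def by (intro add_mono) auto
    finally show ?thesis by (simp add: algebra_simps)
  qed
  moreover have "0 \<le> q * A + G" using A g_bounded q_nonneg unfolding weighted_bounded_def by simp
  ultimately have "weighted_bounded I w (q * A + G) (\<theta> (Suc n))" unfolding weighted_bounded_def by blast
  thus ?case ..
qed

lemma increment_bounded: "weighted_bounded I w (q ^ Suc n * G) (\<lambda>k. \<theta> (Suc n) k - \<theta> n k)"
proof (induction n)
  case 0
  have "\<theta> 1 k - \<theta> 0 k = T (\<theta> 0) k" if "k \<in> I" for k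
    using iterate_Suc[OF that, of 0] iterate_0[OF that] by simp
  thus ?case using T_bounded[OF iterate_0_bounded] q_nonneg g_bounded
    unfolding weighted_bounded_def by simp
next
  case (Suc n)
  obtain A B where A: "weighted_bounded I w A (\<theta> (Suc n))" and B: "weighted_bounded I w B (\<theta> n)"
    using iterate_bounded by blast
  have "\<theta> (Suc (Suc n)) k - \<theta> (Suc n) k = T (\<lambda>j. \<theta> (Suc n) j - \<theta> n j) k" if "k \<in> I" for k
    using iterate_Suc[OF that, of "Suc n"] iterate_Suc[OF that, of n] T_diff[OF A B that] by simp
  thus ?case using T_bounded[OF Suc.IH] Suc.IH q_nonneg
    unfolding weighted_bounded_def by (simp add: mult.assoc)
qed

lemma iterates_converge:
  "\<exists>L. \<forall>k\<in>I. (\<lambda>n. \<theta> n k) \<longlonglongrightarrow> L k \<and> norm (\<theta> 1 k - L k) \<le> q\<^sup>2 / (1 - q) * G * w k"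
proof -
  define d where "d i k = \<theta> (Suc i) k - \<theta> i k" for i k
  have d_le: "norm (d i k) \<le> G * w k * q * q ^ i" if "k \<in> I" for i k
    using increment_bounded[of i] that unfolding weighted_bounded_def d_def by (simp add: mult_ac)
  have geom: "(\<lambda>i. c * q ^ i) sums (c / (1 - q))" for c
    using sums_mult[OF geometric_sums, of q c] q_nonneg q_less_one by simp
  have summable_d: "summable (\<lambda>i. norm (d i k))" if "k \<in> I" for k
    by (rule summable_comparison_test'[OF sums_summable[OF geom[of "G * w k * q"]]])
      (use d_le[OF that] in simp)
  have partial_sums: "\<theta> n k = \<theta> 0 k + (\<Sum>i<n. d i k)" for n k
    by (induction n) (simp_all add: d_def)
  define L where "L k = \<theta> 0 k + (\<Sum>i. d i k)" for k
  have "(\<lambda>n. \<theta> n k) \<longlonglongrightarrow> L k \<and> norm (\<theta> 1 k - L k) \<le> q\<^sup>2 / (1 - q) * G * w k" if k: "k \<in> I" for k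
  proof
    have sd: "summable (\<lambda>i. d i k)" using summable_d[OF k] by (rule summable_norm_cancel)
    have "(\<lambda>n. \<theta> 0 k + (\<Sum>i<n. d i k)) \<longlonglongrightarrow> L k"
      unfolding L_def by (intro tendsto_add tendsto_const summable_LIMSEQ sd)
    thus "(\<lambda>n. \<theta> n k) \<longlonglongrightarrow> L k" unfolding partial_sums[symmetric] .
    have tail: "\<theta> 1 k - L k = - (\<Sum>i. d (Suc i) k)"
      using suminf_split_head[OF sd] unfolding L_def d_def by simp
    have sn: "summable (\<lambda>i. norm (d (Suc i) k))" using summable_d[OF k] by (subst summable_Suc_iff)
    have "norm (\<theta> 1 k - L k) \<le> (\<Sum>i. norm (d (Suc i) k))"
      unfolding tail norm_minus_cancel by (rule summable_norm[OF sn])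
    also have "\<dots> \<le> (\<Sum>i. G * w k * q\<^sup>2 * q ^ i)"
    proof (rule suminf_le[OF _ sn sums_summable[OF geom]])
      show "norm (d (Suc i) k) \<le> G * w k * q\<^sup>2 * q ^ i" for i
        using d_le[OF k, of "Suc i"] by (simp add: power2_eq_square mult_ac)
    qed
    also have "\<dots> = q\<^sup>2 / (1 - q) * G * w k"
      using sums_unique[OF geom[of "G * w k * q\<^sup>2"]] by (simp add: mult_ac)
    finally show "norm (\<theta> 1 k - L k) \<le> q\<^sup>2 / (1 - q) * G * w k" .
  qed
  thus ?thesis by blast
qed

end

section \<open>The advection operator of a static velocity field\<close>

lemma norm_vector3: "norm (vector [x, y, z] :: real^3) = sqrt (x\<^sup>2 + y\<^sup>2 + z\<^sup>2)"
  by (simp add: norm_eq_sqrt_inner inner_vec_def sum_3 power2_eq_square)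

lemma norm_CH_e:
  assumes "0 < khnorm k \<or> norm (Ez k) = 1"
  shows "norm (CH_e Ez k) = 1"
proof (cases "0 < khnorm k")
  case True
  obtain a b c where k: "k = (a, b, c)" by (cases k) auto
  define A B h where "A = real_of_int a" "B = real_of_int b" "h = khnorm k"
  have hp: "0 < h" using True A_B_h_def by simp
  have h2: "h\<^sup>2 = A\<^sup>2 + B\<^sup>2" unfolding A_B_h_def k khnorm_def by simp
  have "CH_e Ez k = vector [B / h, - A / h, 0]" using True unfolding CH_e_def k A_B_h_def by simp
  hence "norm (CH_e Ez k) = sqrt ((B / h)\<^sup>2 + (- A / h)\<^sup>2 + 0\<^sup>2)" by (simp add: norm_vector3)
  also have "(B / h)\<^sup>2 + (- A / h)\<^sup>2 + 0\<^sup>2 = (A\<^sup>2 + B\<^sup>2) / h\<^sup>2"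
    by (simp add: power_divide add_divide_distrib)
  also have "\<dots> = 1" using hp by (simp add: h2[symmetric])
  finally show ?thesis by simp
next
  case False
  thus ?thesis using assms unfolding CH_e_def by simp
qed

lemma norm_CH_f:
  assumes "0 < khnorm k \<or> norm (Fz k) = 1"
  shows "norm (CH_f Fz k) = 1"
proof (cases "0 < khnorm k")
  case True
  obtain a b c where k: "k = (a, b, c)" by (cases k) auto
  define A B C where "A = real_of_int a" "B = real_of_int b" "C = real_of_int c"
  define h N where "h = khnorm k" "N = knorm k"
  have h: "h = sqrt (A\<^sup>2 + B\<^sup>2)" unfolding h_N_def k khnorm_def A_B_C_def by simp
  have N: "N = sqrt (A\<^sup>2 + B\<^sup>2 + C\<^sup>2)" unfolding h_N_def k knorm_eq A_B_C_def by simp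
  have hp: "0 < h" using True h_N_def by simp
  have h2: "h\<^sup>2 = A\<^sup>2 + B\<^sup>2" using h by simp
  have N2: "N\<^sup>2 = h\<^sup>2 + C\<^sup>2" using N h2 by simp
  have Np: "0 < N" using N2 hp N by (simp add: add_pos_nonneg)
  have "CH_f Fz k = vector [A * C / (N * h), B * C / (N * h), - (h\<^sup>2) / (N * h)]"
    using True unfolding CH_f_def k A_B_C_def h_N_def by simp
  hence "norm (CH_f Fz k)
      = sqrt ((A * C / (N * h))\<^sup>2 + (B * C / (N * h))\<^sup>2 + (- (h\<^sup>2) / (N * h))\<^sup>2)"
    by (simp add: norm_vector3)
  also have "(A * C / (N * h))\<^sup>2 + (B * C / (N * h))\<^sup>2 + (- (h\<^sup>2) / (N * h))\<^sup>2
      = ((A\<^sup>2 + B\<^sup>2) * C\<^sup>2 + h\<^sup>2 * h\<^sup>2) / (N\<^sup>2 * h\<^sup>2)"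
    by (simp add: power_divide power_mult_distrib add_divide_distrib algebra_simps power2_eq_square)
  also have "\<dots> = (h\<^sup>2 * (C\<^sup>2 + h\<^sup>2)) / (N\<^sup>2 * h\<^sup>2)"
    unfolding h2[symmetric] by (simp add: algebra_simps)
  also have "\<dots> = 1" using N2 hp Np by (simp add: add.commute)
  finally show ?thesis by simp
next
  case False
  thus ?thesis using assms unfolding CH_f_def by simp
qed

text \<open>\<open>advection_op \<theta> k\<close> is the \<open>k\<close>-th Fourier coefficient of \<open>\<Delta>\<^sup>-\<^sup>1(u\<cdot>\<nabla>\<theta>)\<close>.\<close>

definition advection_op :: "real \<Rightarrow> real \<Rightarrow> (wv \<Rightarrow> complex) \<Rightarrow> (wv \<Rightarrow> complex)
    \<Rightarrow> (wv \<Rightarrow> real^3) \<Rightarrow> (wv \<Rightarrow> real^3) \<Rightarrow> (wv \<Rightarrow> complex) \<Rightarrow> wv \<Rightarrow> complex" where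
  "advection_op U \<beta> V W Ez Fz \<theta> k =
     - of_real (knorm k powr (-2)) * infsum (adv_term U \<beta> V W Ez Fz \<theta> k) (UNIV - {(0,0,0), k})"

lemma theta_iter_Suc_eq:
  "k \<noteq> (0,0,0) \<Longrightarrow> theta_iter \<gamma> U \<beta> V W Ez Fz (Suc n) k
     = advection_op U \<beta> V W Ez Fz (theta_iter \<gamma> U \<beta> V W Ez Fz n) k - \<gamma> k"
  by (simp add: advection_op_def)

definition theta_weight :: "real \<Rightarrow> real \<Rightarrow> wv \<Rightarrow> real" where
  "theta_weight \<kappa> \<beta> k = knorm k powr (-2) * Kb \<kappa> \<beta> (knorm k)"

lemma theta_weight_pos: "1 \<le> \<kappa> \<Longrightarrow> k \<noteq> (0,0,0) \<Longrightarrow> 0 < theta_weight \<kappa> \<beta> k"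
  using knorm_ge_one[of k] Kb_pos[of "knorm k" \<kappa> \<beta>] by (simp add: theta_weight_def)

locale static_velocity =
  fixes U \<Xi> \<beta> :: real and V W :: "wv \<Rightarrow> complex" and Ez Fz :: "wv \<Rightarrow> real^3"
  assumes U_nonneg: "0 \<le> U"
    and V_bound: "\<And>k. k \<noteq> (0,0,0) \<Longrightarrow> cmod (V k) \<le> \<Xi>"
    and W_bound: "\<And>k. k \<noteq> (0,0,0) \<Longrightarrow> cmod (W k) \<le> \<Xi>"
    and Ez_unit: "\<And>k. k \<noteq> (0,0,0) \<Longrightarrow> khnorm k = 0 \<Longrightarrow> norm (Ez k) = 1"
    and Fz_unit: "\<And>k. k \<noteq> (0,0,0) \<Longrightarrow> khnorm k = 0 \<Longrightarrow> norm (Fz k) = 1"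
begin

lemma Xi_nonneg: "0 \<le> \<Xi>"
proof -
  have "cmod (V (1,0,0)) \<le> \<Xi>" by (rule V_bound) simp
  thus ?thesis using norm_ge_zero[of "V (1,0,0)"] by linarith
qed

lemma norm_udot_le:
  assumes m: "m \<noteq> (0,0,0)"
  shows "cmod (udot U \<beta> V W Ez Fz m j) \<le> 2 * U * \<Xi> * knorm m powr \<beta> * knorm j"
proof -
  define x ee ff where "x = knorm m powr \<beta> * U"
    "ee = CH_e Ez m \<bullet> kvec j" "ff = CH_f Fz m \<bullet> kvec j"
  have x0: "0 \<le> x" unfolding x_ee_ff_def using U_nonneg by simp
  have "0 \<le> khnorm m" by (auto simp: khnorm_def split: prod.splits)
  hence "0 < khnorm m \<or> khnorm m = 0" by linarith
  hence "norm (CH_e Ez m) = 1" "norm (CH_f Fz m) = 1"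
    using Ez_unit[OF m] Fz_unit[OF m] by (blast intro: norm_CH_e norm_CH_f)+
  hence ee: "\<bar>ee\<bar> \<le> knorm j" and ff: "\<bar>ff\<bar> \<le> knorm j"
    using Cauchy_Schwarz_ineq2[of "CH_e Ez m" "kvec j"] Cauchy_Schwarz_ineq2[of "CH_f Fz m" "kvec j"]
    unfolding x_ee_ff_def knorm_def by simp_all
  have "cmod (V m * of_real ee + W m * of_real ff) \<le> cmod (V m * of_real ee) + cmod (W m * of_real ff)"
    by (rule norm_triangle_ineq)
  also have "\<dots> = cmod (V m) * \<bar>ee\<bar> + cmod (W m) * \<bar>ff\<bar>" by (simp add: norm_mult)
  also have "\<dots> \<le> \<Xi> * knorm j + \<Xi> * knorm j"
    using V_bound[OF m] W_bound[OF m] Xi_nonneg ee ff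
    by (intro add_mono mult_mono) auto
  finally have "x * cmod (V m * of_real ee + W m * of_real ff) \<le> x * (2 * \<Xi> * knorm j)"
    using x0 by (intro mult_left_mono) auto
  moreover have "cmod (udot U \<beta> V W Ez Fz m j) = x * cmod (V m * of_real ee + W m * of_real ff)"
    unfolding udot_def x_ee_ff_def using U_nonneg by (simp add: norm_mult)
  ultimately show ?thesis unfolding x_ee_ff_def by (simp add: mult_ac)
qed

lemma norm_adv_term_le:
  assumes j: "j \<noteq> (0,0,0)" "j \<noteq> k" and \<theta>: "cmod (\<theta> j) \<le> A * theta_weight \<kappa> \<beta> j"
  shows "cmod (adv_term U \<beta> V W Ez Fz \<theta> k j) \<le> 2 * U * \<Xi> * A * varpi_summand \<kappa> \<beta> k j"
proof -
  have m: "ksub k j \<noteq> (0,0,0)" using j ksub_eq_zero_iff by simp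
  have s: "0 < knorm j" using knorm_ge_one[OF j(1)] by simp
  have "cmod (adv_term U \<beta> V W Ez Fz \<theta> k j) = cmod (udot U \<beta> V W Ez Fz (ksub k j) j) * cmod (\<theta> j)"
    by (simp add: adv_term_def norm_mult)
  also have "\<dots> \<le> (2 * U * \<Xi> * knorm (ksub k j) powr \<beta> * knorm j) * (A * theta_weight \<kappa> \<beta> j)"
    using norm_udot_le[OF m] \<theta> U_nonneg Xi_nonneg
    by (intro mult_mono) (auto intro!: mult_nonneg_nonneg simp: knorm_nonneg)
  also have "\<dots> = 2 * U * \<Xi> * A * (knorm (ksub k j) powr \<beta> * (knorm j * knorm j powr (-2))
      * Kb \<kappa> \<beta> (knorm j))"
    by (simp add: theta_weight_def mult_ac)
  also have "knorm j * knorm j powr (-2) = inverse (knorm j)"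
  proof -
    have "knorm j powr (-2) = inverse (knorm j ^ 2)"
      using s by (simp add: powr_minus powr_numeral)
    thus ?thesis using s by (simp add: power2_eq_square)
  qed
  finally show ?thesis unfolding varpi_summand_def .
qed

lemma advection_op_bounded:
  assumes \<kappa>: "1 \<le> \<kappa>" and \<beta>: "\<beta> < -2" and k: "k \<noteq> (0,0,0)"
    and \<theta>: "weighted_bounded (UNIV - {(0,0,0)}) (theta_weight \<kappa> \<beta>) A \<theta>"
  shows "adv_term U \<beta> V W Ez Fz \<theta> k summable_on (UNIV - {(0,0,0), k})"
    and "cmod (advection_op U \<beta> V W Ez Fz \<theta> k) \<le> (2 * U * \<Xi> * varpi \<kappa> \<beta>) * A * theta_weight \<kappa> \<beta> k"
proof -
  let ?S = "UNIV - {(0,0,0), k}" and ?f = "adv_term U \<beta> V W Ez Fz \<theta> k"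
  let ?c = "2 * U * \<Xi> * A"
  have c: "0 \<le> ?c" using U_nonneg Xi_nonneg \<theta> by (simp add: weighted_bounded_def)
  have le: "norm (?f j) \<le> ?c * varpi_summand \<kappa> \<beta> k j" if "j \<in> ?S" for j
    using that \<theta> by (intro norm_adv_term_le) (auto simp: weighted_bounded_def)
  have Sc: "(\<lambda>j. ?c * varpi_summand \<kappa> \<beta> k j) summable_on ?S"
    by (rule summable_on_cmult_right[OF varpi_summand_summable(1)[OF \<kappa> \<beta> k]])
  have SN: "(\<lambda>j. norm (?f j)) summable_on ?S"
    by (rule summable_on_comparison_test[OF Sc le]) simp_all
  show "?f summable_on ?S" by (rule abs_summable_summable[OF SN])
  have "norm (infsum ?f ?S) \<le> infsum (\<lambda>j. ?c * varpi_summand \<kappa> \<beta> k j) ?S"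
    using norm_infsum_bound[OF SN] infsum_mono[OF SN Sc le] by linarith
  also have "\<dots> \<le> ?c * (varpi \<kappa> \<beta> * Kb \<kappa> \<beta> (knorm k))"
    using infsum_varpi_summand_le_varpi[OF \<kappa> \<beta> k] c
    by (simp add: infsum_cmult_right[OF varpi_summand_summable(1)[OF \<kappa> \<beta> k]] mult_left_mono)
  finally have "knorm k powr (-2) * norm (infsum ?f ?S)
      \<le> knorm k powr (-2) * (?c * (varpi \<kappa> \<beta> * Kb \<kappa> \<beta> (knorm k)))"
    by (rule mult_left_mono) simp
  thus "cmod (advection_op U \<beta> V W Ez Fz \<theta> k) \<le> (2 * U * \<Xi> * varpi \<kappa> \<beta>) * A * theta_weight \<kappa> \<beta> k"
    by (simp add: advection_op_def theta_weight_def norm_mult mult_ac)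
qed

lemma advection_op_diff:
  assumes \<kappa>: "1 \<le> \<kappa>" and \<beta>: "\<beta> < -2" and k: "k \<noteq> (0,0,0)"
    and \<phi>: "weighted_bounded (UNIV - {(0,0,0)}) (theta_weight \<kappa> \<beta>) A \<phi>"
    and \<psi>: "weighted_bounded (UNIV - {(0,0,0)}) (theta_weight \<kappa> \<beta>) B \<psi>"
  shows "advection_op U \<beta> V W Ez Fz \<phi> k - advection_op U \<beta> V W Ez Fz \<psi> k
       = advection_op U \<beta> V W Ez Fz (\<lambda>j. \<phi> j - \<psi> j) k"
proof -
  have "adv_term U \<beta> V W Ez Fz (\<lambda>j. \<phi> j - \<psi> j) k
      = (\<lambda>j. adv_term U \<beta> V W Ez Fz \<phi> k j - adv_term U \<beta> V W Ez Fz \<psi> k j)"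
    by (simp add: adv_term_def fun_eq_iff algebra_simps)
  thus ?thesis
    using infsum_diff[OF advection_op_bounded(1)[OF \<kappa> \<beta> k \<phi>] advection_op_bounded(1)[OF \<kappa> \<beta> k \<psi>]]
    by (simp add: advection_op_def algebra_simps)
qed

end

lemma finite_knorm_less: "finite {k. knorm k < r}"
proof (rule finite_subset)
  define R where "R = ceiling r"
  show "{k. knorm k < r} \<subseteq> {-R..R} \<times> {-R..R} \<times> {-R..R}"
  proof
    fix k assume "k \<in> {k. knorm k < r}"
    then obtain a b c where k: "k = (a, b, c)" and lt: "knorm (a, b, c) < r" by (cases k) auto
    hence "\<bar>a\<bar> \<le> R" "\<bar>b\<bar> \<le> R" "\<bar>c\<bar> \<le> R"
      using abs_component_le_knorm[where a = a and b = b and c = c] unfolding R_def by linarith+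
    thus "k \<in> {-R..R} \<times> {-R..R} \<times> {-R..R}" unfolding k by auto
  qed
qed simp

lemma source_weighted_bounded:
  fixes \<gamma> :: "wv \<Rightarrow> complex"
  assumes cg: "0 \<le> cg" and \<kappa>: "1 \<le> \<kappa>" and \<alpha>: "\<alpha> \<le> \<beta> - 2" and \<beta>: "\<beta> \<le> 0"
    and decay: "\<And>k. k \<noteq> (0,0,0) \<Longrightarrow> \<kappa> \<le> knorm k \<Longrightarrow> cmod (\<gamma> k) \<le> cg * knorm k powr \<alpha>"
  shows "\<exists>G. weighted_bounded (UNIV - {(0,0,0)}) (theta_weight \<kappa> \<beta>) G \<gamma>"
proof -
  let ?w = "theta_weight \<kappa> \<beta>"
  define F where "F = {k. knorm k < \<kappa>} - {(0,0,0)}"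
  have F: "finite F" unfolding F_def using finite_knorm_less by blast
  have F_nonneg: "0 \<le> cmod (\<gamma> k) / ?w k" if "k \<in> F" for k
    using that theta_weight_pos[OF \<kappa>, where k = k and \<beta> = \<beta>] by (simp add: F_def)
  define G where "G = cg + (\<Sum>k\<in>F. cmod (\<gamma> k) / ?w k)"
  have "0 \<le> (\<Sum>k\<in>F. cmod (\<gamma> k) / ?w k)" by (rule sum_nonneg) (rule F_nonneg)
  hence G_ge: "cg \<le> G" "0 \<le> G" unfolding G_def using cg by auto
  have "cmod (\<gamma> k) \<le> G * ?w k" if k: "k \<noteq> (0,0,0)" for k
  proof (cases "knorm k < \<kappa>")
    case True
    hence "k \<in> F" using k by (simp add: F_def)
    hence "cmod (\<gamma> k) / ?w k \<le> (\<Sum>k\<in>F. cmod (\<gamma> k) / ?w k)"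
      by (rule member_le_sum[OF _ _ F]) (use F_nonneg in blast)
    hence "cmod (\<gamma> k) / ?w k \<le> G" unfolding G_def using cg by linarith
    thus ?thesis using theta_weight_pos[OF \<kappa> k] by (simp add: field_simps)
  next
    case False
    define n where "n = knorm k"
    have n1: "1 \<le> n" unfolding n_def by (rule knorm_ge_one[OF k])
    have "cmod (\<gamma> k) \<le> cg * n powr \<alpha>" using decay[OF k] False n_def by simp
    also have "n powr \<alpha> \<le> n powr \<beta> * n powr (-2)"
      using powr_mono[OF \<alpha> n1] by (simp add: powr_add[symmetric])
    also have "\<dots> \<le> Kb \<kappa> \<beta> n * n powr (-2)"
      by (rule mult_right_mono[OF powr_le_Kb[OF n1 \<kappa> \<beta>]]) simp
    also have "\<dots> = ?w k" unfolding theta_weight_def n_def by simp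
    finally show ?thesis
      using cg G_ge theta_weight_pos[OF \<kappa> k] by (smt (verit) mult_left_mono mult_right_mono)
  qed
  thus ?thesis using G_ge unfolding weighted_bounded_def by blast
qed

context static_velocity
begin

lemma theta_iter_converges:
  assumes \<kappa>: "1 \<le> \<kappa>" and \<beta>: "\<beta> < -2"
    and G: "weighted_bounded (UNIV - {(0,0,0)}) (theta_weight \<kappa> \<beta>) G \<gamma>"
    and \<epsilon>: "4 * U * \<Xi> * varpi \<kappa> \<beta> < 1"
  shows "(\<forall>n k. k \<noteq> (0,0,0) \<longrightarrow>
            adv_term U \<beta> V W Ez Fz (theta_iter \<gamma> U \<beta> V W Ez Fz n) k summable_on (UNIV - {(0,0,0), k}))
       \<and> (\<exists>\<theta>inf. (\<forall>k. k \<noteq> (0,0,0) \<longrightarrow> (\<lambda>n. theta_iter \<gamma> U \<beta> V W Ez Fz n k) \<longlonglongrightarrow> \<theta>inf k)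
          \<and> (\<forall>k. k \<noteq> (0,0,0) \<longrightarrow>
               cmod (theta_iter \<gamma> U \<beta> V W Ez Fz 1 k - \<theta>inf k)
                 \<le> (2 * G * varpi \<kappa> \<beta> * U * \<Xi>) * (4 * U * \<Xi> * varpi \<kappa> \<beta>)
                     * knorm k powr (-2) * Kb \<kappa> \<beta> (knorm k)))"
proof -
  let ?I = "UNIV - {(0,0,0)}" and ?w = "theta_weight \<kappa> \<beta>" and ?q = "2 * U * \<Xi> * varpi \<kappa> \<beta>"
  let ?\<theta> = "theta_iter \<gamma> U \<beta> V W Ez Fz"
  have q: "0 \<le> ?q" "?q < 1/2" using U_nonneg Xi_nonneg varpi_nonneg[OF \<kappa> \<beta>] \<epsilon> by auto
  interpret iteration: weighted_contraction_iteration ?I ?w ?q G "advection_op U \<beta> V W Ez Fz"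
    "\<lambda>k. - \<gamma> k" ?\<theta>
    using q G advection_op_bounded(2)[OF \<kappa> \<beta>] advection_op_diff[OF \<kappa> \<beta>] theta_iter_Suc_eq
    by unfold_locales (auto simp: weighted_bounded_def)
  have "adv_term U \<beta> V W Ez Fz (?\<theta> n) k summable_on (UNIV - {(0,0,0), k})" if "k \<noteq> (0,0,0)" for n k
    using iteration.iterate_bounded[of n] advection_op_bounded(1)[OF \<kappa> \<beta> that] by blast
  moreover obtain L where "\<forall>k\<in>?I. (\<lambda>n. ?\<theta> n k) \<longlonglongrightarrow> L k
      \<and> cmod (?\<theta> 1 k - L k) \<le> ?q\<^sup>2 / (1 - ?q) * G * ?w k"
    using iteration.iterates_converge by blast
  moreover have "?q\<^sup>2 / (1 - ?q) * G * ?w k \<le> (2 * G * varpi \<kappa> \<beta> * U * \<Xi>) * (4 * U * \<Xi> * varpi \<kappa> \<beta>)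
      * knorm k powr (-2) * Kb \<kappa> \<beta> (knorm k)" if "k \<noteq> (0,0,0)" for k
  proof -
    have "?q\<^sup>2 / (1 - ?q) \<le> ?q\<^sup>2 / (1/2)" using q by (intro divide_left_mono) auto
    hence "?q\<^sup>2 / (1 - ?q) \<le> 2 * ?q\<^sup>2" by simp
    moreover have "0 \<le> G * ?w k"
      using G theta_weight_pos[OF \<kappa> that, of \<beta>] unfolding weighted_bounded_def
      by (intro mult_nonneg_nonneg) auto
    ultimately have "?q\<^sup>2 / (1 - ?q) * (G * ?w k) \<le> 2 * ?q\<^sup>2 * (G * ?w k)" by (rule mult_right_mono)
    thus ?thesis by (simp add: theta_weight_def power2_eq_square mult_ac)
  qed
  ultimately show ?thesis by (meson DiffI UNIV_I singletonD order_trans)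
qed

end

theorem mainTheorem7:
  fixes \<gamma> :: "wv \<Rightarrow> complex" and cg \<kappa>g \<alpha> \<beta> :: real
  assumes cg: "cg \<ge> 0"
    and \<kappa>g: "\<kappa>g \<ge> 16"
    and \<alpha>neg: "\<alpha> < 0"
    and \<alpha>: "\<alpha> \<le> 2 * min \<beta> (-3) - 1"
    and \<beta>: "\<beta> < -2"
    and \<gamma>_conj: "\<And>k. k \<noteq> (0,0,0) \<Longrightarrow> \<gamma> (kneg k) = cnj (\<gamma> k)"
    and \<gamma>_decay: "\<And>k. k \<noteq> (0,0,0) \<Longrightarrow> knorm k \<ge> \<kappa>g \<Longrightarrow> cmod (\<gamma> k) \<le> cg * knorm k powr \<alpha>"
  shows "\<exists>C::real. \<forall>(U::real) (\<Xi>::real) (V::wv \<Rightarrow> complex) (W::wv \<Rightarrow> complex)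
            (Ez::wv \<Rightarrow> real^3) (Fz::wv \<Rightarrow> real^3).
     U \<ge> 0
     \<longrightarrow> (\<forall>k. k \<noteq> (0,0,0) \<longrightarrow> V (kneg k) = cnj (V k) \<and> W (kneg k) = cnj (W k))
     \<longrightarrow> (\<forall>k. k \<noteq> (0,0,0) \<longrightarrow> cmod (V k) \<le> \<Xi> \<and> cmod (W k) \<le> \<Xi>)
     \<longrightarrow> (\<forall>k. k \<noteq> (0,0,0) \<longrightarrow> khnorm k = 0 \<longrightarrow>
            norm (Ez k) = 1 \<and> norm (Fz k) = 1 \<and> Ez k \<bullet> Fz k = 0 \<and>
            Ez k \<bullet> kvec k = 0 \<and> Fz k \<bullet> kvec k = 0)
     \<longrightarrow> 4 * U * \<Xi> * varpi \<kappa>g \<beta> < 1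
     \<longrightarrow> (\<forall>n k. k \<noteq> (0,0,0) \<longrightarrow>
            adv_term U \<beta> V W Ez Fz (theta_iter \<gamma> U \<beta> V W Ez Fz n) k summable_on (UNIV - {(0,0,0), k}))
       \<and> (\<exists>\<theta>inf :: wv \<Rightarrow> complex.
            (\<forall>k. k \<noteq> (0,0,0) \<longrightarrow> (\<lambda>n. theta_iter \<gamma> U \<beta> V W Ez Fz n k) \<longlonglongrightarrow> \<theta>inf k)
          \<and> (\<forall>k. k \<noteq> (0,0,0) \<longrightarrow>
               cmod (theta_iter \<gamma> U \<beta> V W Ez Fz 1 k - \<theta>inf k)
                 \<le> (C * U * \<Xi>) * (4 * U * \<Xi> * varpi \<kappa>g \<beta>)
                     * knorm k powr (-2) * Kb \<kappa>g \<beta> (knorm k)))"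
proof -
  \<comment> \<open>Only \<open>\<kappa>\<^sub>g \<ge> 1\<close>, \<open>\<alpha> \<le> \<beta> - 2\<close> and the unit length of the frame vectors enter.\<close>
  have \<kappa>1: "1 \<le> \<kappa>g" using \<kappa>g by simp
  have \<alpha>2: "\<alpha> \<le> \<beta> - 2" using \<alpha> \<beta> by (simp add: min_def split: if_splits)
  obtain G where G: "weighted_bounded (UNIV - {(0,0,0)}) (theta_weight \<kappa>g \<beta>) G \<gamma>"
    using source_weighted_bounded[OF cg \<kappa>1 \<alpha>2 _ \<gamma>_decay] \<beta> by force
  show ?thesis
    by (intro exI[of _ "2 * G * varpi \<kappa>g \<beta>"] allI impI
        static_velocity.theta_iter_converges[OF _ \<kappa>1 \<beta> G])
      (auto simp: static_velocity_def)
qed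

end
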